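(* Let $T>0$ and let $\theta=(W,V)\colon[0,T)\to\mathbb{R}^D$ be any solution of the differential inclusion $\dot\theta(t)\in-\partial\mathcal{L}(\theta(t))$ for a.e. $t\in[0,T)$. Set $\bar{\mathcal{L}}(t)=\int_0^t\sqrt{\mathcal{L}(\theta(s))}\,ds$. Then for every $t\in[0,T)$, $$\|\theta(t)-\theta(0)\|\le\sqrt2\|X\|_{op}\big(\|W(0)\|_F+\|V(0)\|_F\big)\bar{\mathcal{L}}(t)\exp\big(\sqrt2\|X\|_{op}\bar{\mathcal{L}}(t)\big),$$ and $$\|X\|_{op}\|W(t)-W(0)\|_F\le\frac12\Big(c_1\bar{\mathcal{L}}(t)+c_2\bar{\mathcal{L}}(t)^2\Big)\exp\big(c\,\bar{\mathcal{L}}(t)^2\big),$$ where $c_1=2\sqrt2\|X\|_{op}^2\|V(0)\|_F$, $c_2=2\|X\|_{op}^3\|W(0)\|_F$, $c=\|X\|_{op}^2$.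
   Context: Fixed $X\in\mathbb{R}^{N\times d_0}$, $Y\in\mathbb{R}^{N\times d_2}$. Parameters $\theta=(W,V)$, $W\in\mathbb{R}^{d_0\times d_1}$, $V\in\mathbb{R}^{d_1\times d_2}$, identified with a vector in $\mathbb{R}^D$, $D=d_0d_1+d_1d_2$, with $\|\theta\|$ the Euclidean norm of this vector. $\phi(x)=\max(x,0)$ entrywise, $\hat Y=\phi(XW)V$, $\mathcal{L}(\theta)=\frac12\|Y-\hat Y\|_F^2$. $\partial$ is the Clarke subdifferential; solutions are absolutely continuous curves. $\|\cdot\|_{op}$, $\|\cdot\|_F$ are operator and Frobenius norms. *)

theory Defs
  imports "HOL-Analysis.Analysis"
begin

definition abs_continuous_on :: "real \<Rightarrow> real \<Rightarrow> (real \<Rightarrow> 'a::real_normed_vector) \<Rightarrow> bool" where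
  "abs_continuous_on a b f \<longleftrightarrow>
     (\<forall>e>0. \<exists>d>0. \<forall>(n::nat) (u::nat \<Rightarrow> real) (v::nat \<Rightarrow> real).
        (\<forall>i<n. a \<le> u i \<and> u i \<le> v i \<and> v i \<le> b) \<and>
        (\<forall>i<n. \<forall>j<n. i \<noteq> j \<longrightarrow> v i \<le> u j \<or> v j \<le> u i) \<and>
        (\<Sum>i<n. v i - u i) < d
        \<longrightarrow> (\<Sum>i<n. norm (f (v i) - f (u i))) < e)"

definition clarke_dir :: "('a::real_inner \<Rightarrow> real) \<Rightarrow> 'a \<Rightarrow> 'a \<Rightarrow> ereal" where
  "clarke_dir f x v =
     Limsup (at (x, 0) within (UNIV \<times> {0<..})) (\<lambda>(y, t). ereal ((f (y + t *\<^sub>R v) - f y) / t))"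

definition clarke_subdiff :: "('a::real_inner \<Rightarrow> real) \<Rightarrow> 'a \<Rightarrow> 'a set" where
  "clarke_subdiff f x = {\<xi>. \<forall>v. ereal (\<xi> \<bullet> v) \<le> clarke_dir f x v}"

definition relu_mat :: "real^'m^'n \<Rightarrow> real^'m^'n" where
  "relu_mat A = (\<chi> i j. max (A $ i $ j) 0)"

text \<open>Loss of the two-layer ReLU network; the norm on real^'m^'n is the Frobenius norm.\<close>
definition loss :: "real^'d0^'n \<Rightarrow> real^'d2^'n \<Rightarrow> (real^'d1^'d0) \<times> (real^'d2^'d1) \<Rightarrow> real" where
  "loss X Y \<theta> = (1/2) * (norm (Y - relu_mat (X ** fst \<theta>) ** snd \<theta>))\<^sup>2"

definition opnorm :: "real^'m^'n \<Rightarrow> real" where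
  "opnorm A = onorm (\<lambda>x. A *v x)"

end

theory Submission
  imports Defs
begin

(* Changing only one layer moves the residual by at most ||X||_op times the change times the
   norm of the other layer, because ReLU is 1-Lipschitz. Hence every Clarke subgradient xi of
   the loss at (W, V) satisfies ||xi_W|| <= k sqrt L ||V|| and ||xi_V|| <= k sqrt L ||W||, with
   k = sqrt 2 ||X||_op. Integrating these velocity bounds along the absolutely continuous
   trajectory gives ||W(s) - W(0)|| <= int_0^s k sqrt L ||V|| and symmetrically for V.
   Gronwall's lemma for ||W|| + ||V|| yields the first estimate. For the second, the majorant
   P(s) = int_0^s k sqrt L (||V(0)|| + ||V - V(0)||) dominates ||W(s) - W(0)||, while
   ||V(s) - V(0)|| <= k Lbar(s) (||W(0)|| + P(s)) with Lbar(s) = int_0^s sqrt L; so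
   P' <= a + b P with b = k^2 sqrt L Lbar, and Gronwall gives the factor exp (k^2 Lbar^2 / 2). *)

section \<open>Frobenius and operator norms of matrices\<close>

lemma norm_matrix_sq_rows: "(norm (A::real^'m^'n))\<^sup>2 = (\<Sum>i\<in>UNIV. (norm (A $ i))\<^sup>2)"
  by (simp add: norm_vec_def L2_set_def sum_nonneg)

lemma norm_matrix_sq_columns: "(norm (A::real^'m^'n))\<^sup>2 = (\<Sum>j\<in>UNIV. (norm (column j A))\<^sup>2)"
proof -
  have "(norm A)\<^sup>2 = (\<Sum>i\<in>UNIV. \<Sum>j\<in>UNIV. (A $ i $ j)\<^sup>2)"
    by (simp add: norm_vec_def L2_set_def sum_nonneg)
  also have "\<dots> = (\<Sum>j\<in>UNIV. \<Sum>i\<in>UNIV. (A $ i $ j)\<^sup>2)"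
    by (rule sum.swap)
  also have "\<dots> = (\<Sum>j\<in>UNIV. (norm (column j A))\<^sup>2)"
    by (simp add: norm_vec_def L2_set_def sum_nonneg column_def)
  finally show ?thesis .
qed

lemma norm_matrix_vector_mult_le: "norm ((A::real^'m^'n) *v x) \<le> norm A * norm x"
proof (rule power2_le_imp_le)
  have "(norm (A *v x))\<^sup>2 = (\<Sum>i\<in>UNIV. (A $ i \<bullet> x)\<^sup>2)"
    by (simp add: norm_vec_def L2_set_def sum_nonneg matrix_vector_mult_def inner_vec_def
        mult.commute)
  also have "\<dots> \<le> (\<Sum>i\<in>UNIV. (norm (A $ i))\<^sup>2 * (norm x)\<^sup>2)"
    by (intro sum_mono) (metis Cauchy_Schwarz_ineq power_mult_distrib power2_norm_eq_inner)
  also have "\<dots> = (norm A * norm x)\<^sup>2"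
    by (simp add: norm_matrix_sq_rows sum_distrib_right power_mult_distrib)
  finally show "(norm (A *v x))\<^sup>2 \<le> (norm A * norm x)\<^sup>2" .
qed simp

lemma opnorm_nonneg: "0 \<le> opnorm A"
  unfolding opnorm_def by (rule onorm_pos_le) simp

lemma opnorm_le_norm: "opnorm (A::real^'m^'n) \<le> norm A"
  unfolding opnorm_def by (rule onorm_le) (rule norm_matrix_vector_mult_le)

lemma norm_matrix_mult_le_opnorm: "norm ((A::real^'m^'n) ** (B::real^'k^'m)) \<le> opnorm A * norm B"
proof (rule power2_le_imp_le)
  have column_mult: "column j (A ** B) = A *v column j B" for j
    by (simp add: vec_eq_iff column_def matrix_matrix_mult_def matrix_vector_mult_def)
  have "(norm (A ** B))\<^sup>2 = (\<Sum>j\<in>UNIV. (norm (A *v column j B))\<^sup>2)"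
    by (simp add: norm_matrix_sq_columns column_mult)
  also have "\<dots> \<le> (\<Sum>j\<in>UNIV. (opnorm A * norm (column j B))\<^sup>2)"
    unfolding opnorm_def by (intro sum_mono power_mono onorm) simp_all
  also have "\<dots> = (opnorm A * norm B)\<^sup>2"
    by (simp add: norm_matrix_sq_columns[of B] sum_distrib_left power_mult_distrib)
  finally show "(norm (A ** B))\<^sup>2 \<le> (opnorm A * norm B)\<^sup>2" .
qed (simp add: opnorm_nonneg)

lemma norm_matrix_mult_le: "norm ((A::real^'m^'n) ** (B::real^'k^'m)) \<le> norm A * norm B"
  by (meson norm_matrix_mult_le_opnorm opnorm_le_norm mult_right_mono norm_ge_zero order_trans)

lemma scaleR_matrix_mult: "(r *\<^sub>R A) ** B = r *\<^sub>R (A ** (B::real^'k^'m))" for A :: "real^'m^'n"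
  by (simp add: vec_eq_iff matrix_matrix_mult_def sum_distrib_left mult.assoc)

lemma matrix_mult_scaleR: "A ** (r *\<^sub>R B) = r *\<^sub>R (A ** (B::real^'k^'m))" for A :: "real^'m^'n"
  by (simp add: vec_eq_iff matrix_matrix_mult_def sum_distrib_left mult.left_commute)

lemma matrix_diff_rdistrib: "(A - B) ** C = A ** C - B ** (C::real^'k^'m)" for A B :: "real^'m^'n"
  by (simp add: vec_eq_iff matrix_matrix_mult_def sum_subtractf left_diff_distrib)

lemma bounded_bilinear_matrix_mult:
  "bounded_bilinear (\<lambda>(A::real^'m^'n) (B::real^'k^'m). A ** B)"
proof
  fix A A' :: "real^'m^'n" and B B' :: "real^'k^'m" and r :: real
  show "(A + A') ** B = A ** B + A' ** B"
    by (simp add: vec_eq_iff matrix_matrix_mult_def sum.distrib distrib_right)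
  show "A ** (B + B') = A ** B + A ** B'" by (rule matrix_add_ldistrib)
  show "(r *\<^sub>R A) ** B = r *\<^sub>R (A ** B)" by (rule scaleR_matrix_mult)
  show "A ** (r *\<^sub>R B) = r *\<^sub>R (A ** B)" by (rule matrix_mult_scaleR)
next
  show "\<exists>K. \<forall>(A::real^'m^'n) (B::real^'k^'m). norm (A ** B) \<le> norm A * norm B * K"
    by (rule exI[of _ 1]) (simp add: norm_matrix_mult_le)
qed

lemma norm_relu_mat_diff_le: "norm (relu_mat A - relu_mat B) \<le> norm (A - B)"
proof (rule power2_le_imp_le)
  have "\<bar>max a 0 - max b 0\<bar> \<le> \<bar>a - b\<bar>" for a b :: real by linarith
  then have "(max a 0 - max b 0)\<^sup>2 \<le> (a - b)\<^sup>2" for a b :: real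
    by (metis abs_le_square_iff)
  then show "(norm (relu_mat A - relu_mat B))\<^sup>2 \<le> (norm (A - B))\<^sup>2"
    by (simp add: norm_vec_def L2_set_def sum_nonneg relu_mat_def sum_mono)
qed simp

lemma relu_mat_zero [simp]: "relu_mat 0 = 0"
  by (simp add: relu_mat_def vec_eq_iff)

lemma norm_relu_mat_le: "norm (relu_mat A) \<le> norm A"
  using norm_relu_mat_diff_le[of A 0] by simp

lemma tendsto_relu_mat [tendsto_intros]:
  "(f \<longlongrightarrow> l) F \<Longrightarrow> ((\<lambda>x. relu_mat (f x)) \<longlongrightarrow> relu_mat l) F"
proof -
  assume "(f \<longlongrightarrow> l) F"
  then have "((\<lambda>x. f x - l) \<longlongrightarrow> 0) F"
    by (rule LIM_zero)
  then have "((\<lambda>x. relu_mat (f x) - relu_mat l) \<longlongrightarrow> 0) F"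
    by (rule Lim_transform_bound[rotated]) (simp add: norm_relu_mat_diff_le)
  then show ?thesis
    by (rule LIM_zero_cancel)
qed

section \<open>Clarke subgradients of the loss\<close>

definition residual ::
    "real^'d0^'n \<Rightarrow> real^'d2^'n \<Rightarrow> (real^'d1^'d0) \<times> (real^'d2^'d1) \<Rightarrow> real^'d2^'n" where
  "residual X Y \<theta> = Y - relu_mat (X ** fst \<theta>) ** snd \<theta>"

lemma loss_eq_residual: "loss X Y \<theta> = (1/2) * (norm (residual X Y \<theta>))\<^sup>2"
  by (simp add: loss_def residual_def)

lemma norm_residual: "norm (residual X Y \<theta>) = sqrt 2 * sqrt (loss X Y \<theta>)"
  by (simp add: loss_eq_residual real_sqrt_mult[symmetric])

lemma isCont_residual: "isCont (residual X Y) \<theta>"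
  unfolding isCont_def residual_def
  by (intro tendsto_intros bounded_bilinear.tendsto[OF bounded_bilinear_matrix_mult])

lemma continuous_on_loss: "continuous_on S (loss X Y)"
  unfolding loss_eq_residual[abs_def]
  by (intro continuous_at_imp_continuous_on ballI continuous_intros isCont_residual)

lemma half_sq_difference_quotient_le:
  fixes a b t K :: real
  assumes "0 \<le> a" "0 \<le> b" "a \<le> b + t * K" "0 < t" "0 \<le> K"
  shows "((1/2) * a\<^sup>2 - (1/2) * b\<^sup>2) / t \<le> K * (b + t * K / 2)"
proof -
  have "a\<^sup>2 \<le> (b + t * K)\<^sup>2"
    using assms by (intro power_mono) auto
  then show ?thesis
    using assms by (simp add: field_simps power2_eq_square)
qed

(* The difference quotients of (1/2) ||R||^2 along v are at most K y (||R y|| + t K y / 2),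
   which tends to K x ||R x||; so their limsup, the Clarke directional derivative, is bounded. *)
lemma clarke_subdiff_half_norm_sq_inner_le:
  fixes R :: "'a::real_inner \<Rightarrow> 'b::real_normed_vector"
  assumes R_cont: "\<And>y. isCont R y" and K_cont: "\<And>y. isCont K y"
    and step: "\<And>y t. 0 < t \<Longrightarrow> norm (R (y + t *\<^sub>R v) - R y) \<le> t * K y"
    and \<xi>: "\<xi> \<in> clarke_subdiff (\<lambda>y. (1/2) * (norm (R y))\<^sup>2) x"
  shows "\<xi> \<bullet> v \<le> K x * norm (R x)"
proof (rule field_le_epsilon)
  fix e :: real assume "0 < e"
  define f where "f = (\<lambda>y. (1/2) * (norm (R y))\<^sup>2)"
  define F where "F = at (x, 0::real) within UNIV \<times> {0<..}"
  define h where "h = (\<lambda>(y, t). K y * (norm (R y) + t * K y / 2))"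
  have quotient_le: "(f (y + t *\<^sub>R v) - f y) / t \<le> h (y, t)" if "0 < t" for y t
  proof -
    have "0 \<le> K y"
      using step[OF that, of y] that by (meson norm_ge_zero order_trans zero_le_mult_iff not_less)
    moreover have "norm (R (y + t *\<^sub>R v)) \<le> norm (R y) + t * K y"
      using norm_triangle_ineq2[of "R (y + t *\<^sub>R v)" "R y"] step[OF that, of y] by simp
    ultimately show ?thesis
      unfolding f_def h_def prod.case using that by (intro half_sq_difference_quotient_le) auto
  qed
  have "((\<lambda>p. p) \<longlongrightarrow> (x, 0)) F"
    unfolding F_def by (rule tendsto_ident_at)
  then have "(fst \<longlongrightarrow> x) F" "(snd \<longlongrightarrow> 0) F"
    using tendsto_fst tendsto_snd by fastforce+
  then have "(h \<longlongrightarrow> K x * (norm (R x) + 0 * K x / 2)) F"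
    unfolding h_def case_prod_beta
    by (intro tendsto_intros isCont_tendsto_compose[OF K_cont] isCont_tendsto_compose[OF R_cont])
      simp_all
  then have "\<forall>\<^sub>F p in F. h p < K x * norm (R x) + e"
    using \<open>0 < e\<close> by (intro order_tendstoD(2)) auto
  moreover have "\<forall>\<^sub>F p in F. snd p > 0"
    unfolding F_def eventually_at_filter by (auto intro: always_eventually)
  ultimately have "\<forall>\<^sub>F p in F. (\<lambda>(y, t). ereal ((f (y + t *\<^sub>R v) - f y) / t)) p
      \<le> ereal (K x * norm (R x) + e)"
  proof eventually_elim
    case (elim p)
    then show ?case
      using quotient_le[of "snd p" "fst p"] by (cases p) auto
  qed
  then have "clarke_dir f x v \<le> ereal (K x * norm (R x) + e)"
    unfolding clarke_dir_def F_def by (rule Limsup_bounded)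
  moreover have "ereal (\<xi> \<bullet> v) \<le> clarke_dir f x v"
    using \<xi> unfolding clarke_subdiff_def f_def by auto
  ultimately show "\<xi> \<bullet> v \<le> K x * norm (R x) + e"
    using ereal_less_eq(3) order_trans by blast
qed

lemma clarke_subdiff_loss_fst_bound:
  fixes \<theta> :: "(real^'d1^'d0) \<times> (real^'d2^'d1)"
  assumes \<xi>: "\<xi> \<in> clarke_subdiff (loss X Y) \<theta>"
  shows "norm (fst \<xi>) \<le> sqrt 2 * opnorm X * sqrt (loss X Y \<theta>) * norm (snd \<theta>)"
proof -
  define d where "d = fst \<xi>"
  define K where "K = (\<lambda>y::(real^'d1^'d0) \<times> (real^'d2^'d1). opnorm X * norm d * norm (snd y))"
  have "\<xi> \<bullet> (d, 0) \<le> K \<theta> * norm (residual X Y \<theta>)"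
  proof (rule clarke_subdiff_half_norm_sq_inner_le)
    show "isCont (residual X Y) y" "isCont K y" for y
      unfolding K_def by (intro continuous_intros isCont_residual)+
    show "\<xi> \<in> clarke_subdiff (\<lambda>y. (1/2) * (norm (residual X Y y))\<^sup>2) \<theta>"
      using \<xi> by (simp add: loss_eq_residual[abs_def])
    fix y and t :: real assume "0 < t"
    have "residual X Y (y + t *\<^sub>R (d, 0)) - residual X Y y
        = (relu_mat (X ** fst y) - relu_mat (X ** (fst y + t *\<^sub>R d))) ** snd y"
      by (simp add: residual_def matrix_diff_rdistrib)
    then have "norm (residual X Y (y + t *\<^sub>R (d, 0)) - residual X Y y)
        \<le> norm (relu_mat (X ** fst y) - relu_mat (X ** (fst y + t *\<^sub>R d))) * norm (snd y)"
      by (simp add: norm_matrix_mult_le)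
    also have "\<dots> \<le> norm (X ** fst y - X ** (fst y + t *\<^sub>R d)) * norm (snd y)"
      by (intro mult_right_mono norm_relu_mat_diff_le) simp
    also have "X ** fst y - X ** (fst y + t *\<^sub>R d) = - (t *\<^sub>R (X ** d))"
      by (simp add: matrix_add_ldistrib matrix_mult_scaleR)
    also have "norm (- (t *\<^sub>R (X ** d))) * norm (snd y) \<le> t * (opnorm X * norm d) * norm (snd y)"
      using \<open>0 < t\<close> norm_matrix_mult_le_opnorm[of X d] by (simp add: mult_left_mono mult_right_mono)
    finally show "norm (residual X Y (y + t *\<^sub>R (d, 0)) - residual X Y y) \<le> t * K y"
      by (simp add: K_def mult_ac)
  qed
  then have "(norm d)\<^sup>2 \<le> norm d * (opnorm X * norm (snd \<theta>) * norm (residual X Y \<theta>))"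
    by (simp add: inner_Pair_0 d_def K_def power2_norm_eq_inner mult_ac)
  then have "norm d \<le> opnorm X * norm (snd \<theta>) * norm (residual X Y \<theta>)"
    using opnorm_nonneg[of X] by (cases "d = 0") (auto simp: power2_eq_square)
  then show ?thesis
    by (simp add: d_def norm_residual mult_ac)
qed

lemma clarke_subdiff_loss_snd_bound:
  fixes \<theta> :: "(real^'d1^'d0) \<times> (real^'d2^'d1)"
  assumes \<xi>: "\<xi> \<in> clarke_subdiff (loss X Y) \<theta>"
  shows "norm (snd \<xi>) \<le> sqrt 2 * opnorm X * sqrt (loss X Y \<theta>) * norm (fst \<theta>)"
proof -
  define d where "d = snd \<xi>"
  define K where "K = (\<lambda>y::(real^'d1^'d0) \<times> (real^'d2^'d1). opnorm X * norm (fst y) * norm d)"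
  have "\<xi> \<bullet> (0, d) \<le> K \<theta> * norm (residual X Y \<theta>)"
  proof (rule clarke_subdiff_half_norm_sq_inner_le)
    show "isCont (residual X Y) y" "isCont K y" for y
      unfolding K_def by (intro continuous_intros isCont_residual)+
    show "\<xi> \<in> clarke_subdiff (\<lambda>y. (1/2) * (norm (residual X Y y))\<^sup>2) \<theta>"
      using \<xi> by (simp add: loss_eq_residual[abs_def])
    fix y and t :: real assume "0 < t"
    have "residual X Y (y + t *\<^sub>R (0, d)) - residual X Y y = - (t *\<^sub>R (relu_mat (X ** fst y) ** d))"
      by (simp add: residual_def matrix_add_ldistrib matrix_mult_scaleR)
    then have "norm (residual X Y (y + t *\<^sub>R (0, d)) - residual X Y y)
        = t * norm (relu_mat (X ** fst y) ** d)"
      using \<open>0 < t\<close> by simp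
    also have "\<dots> \<le> t * (norm (X ** fst y) * norm d)"
      using \<open>0 < t\<close> norm_matrix_mult_le[of "relu_mat (X ** fst y)" d]
        norm_relu_mat_le[of "X ** fst y"]
      by (meson mult_left_mono mult_right_mono norm_ge_zero order_trans less_imp_le)
    also have "\<dots> \<le> t * K y"
      using \<open>0 < t\<close> norm_matrix_mult_le_opnorm[of X "fst y"] unfolding K_def
      by (simp add: mult_left_mono mult_right_mono)
    finally show "norm (residual X Y (y + t *\<^sub>R (0, d)) - residual X Y y) \<le> t * K y" .
  qed
  then have "(norm d)\<^sup>2 \<le> norm d * (opnorm X * norm (fst \<theta>) * norm (residual X Y \<theta>))"
    by (simp add: inner_Pair_0 d_def K_def power2_norm_eq_inner mult_ac)
  then have "norm d \<le> opnorm X * norm (fst \<theta>) * norm (residual X Y \<theta>)"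
    using opnorm_nonneg[of X] by (cases "d = 0") (auto simp: power2_eq_square)
  then show ?thesis
    by (simp add: d_def norm_residual mult_ac)
qed

section \<open>Absolutely continuous curves\<close>

lemma abs_continuous_onE:
  assumes "abs_continuous_on a b f" "0 < e"
  obtains d where "0 < d"
    "\<And>(n::nat) u v. (\<And>i. i < n \<Longrightarrow> a \<le> u i \<and> u i \<le> v i \<and> v i \<le> b) \<Longrightarrow>
       (\<And>i j. i < n \<Longrightarrow> j < n \<Longrightarrow> i \<noteq> j \<Longrightarrow> v i \<le> u j \<or> v j \<le> u i) \<Longrightarrow>
       (\<Sum>i<n. v i - u i) < d \<Longrightarrow> (\<Sum>i<n. norm (f (v i) - f (u i))) < e"
proof -
  obtain d where "0 < d" and small: "\<forall>(n::nat) u v. (\<forall>i<n. a \<le> u i \<and> u i \<le> v i \<and> v i \<le> b) \<and>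
      (\<forall>i<n. \<forall>j<n. i \<noteq> j \<longrightarrow> v i \<le> u j \<or> v j \<le> u i) \<and> (\<Sum>i<n. v i - u i) < d
      \<longrightarrow> (\<Sum>i<n. norm (f (v i) - f (u i))) < e"
    using assms(1)[unfolded abs_continuous_on_def, rule_format, OF assms(2)] by (elim exE conjE)
  show thesis
  proof (rule that[OF \<open>0 < d\<close>])
    fix n :: nat and u v :: "nat \<Rightarrow> real"
    assume "\<And>i. i < n \<Longrightarrow> a \<le> u i \<and> u i \<le> v i \<and> v i \<le> b"
      "\<And>i j. i < n \<Longrightarrow> j < n \<Longrightarrow> i \<noteq> j \<Longrightarrow> v i \<le> u j \<or> v j \<le> u i"
      "(\<Sum>i<n. v i - u i) < d"
    then show "(\<Sum>i<n. norm (f (v i) - f (u i))) < e"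
      by (intro small[rule_format] conjI allI impI) auto
  qed
qed

lemma abs_continuous_on_imp_continuous_on:
  assumes "abs_continuous_on a b f"
  shows "continuous_on {a..b} f"
  unfolding continuous_on_iff
proof (intro ballI allI impI)
  fix x e :: real assume x: "x \<in> {a..b}" and "0 < e"
  obtain d where "0 < d" and small: "\<And>(n::nat) u v.
       (\<And>i. i < n \<Longrightarrow> a \<le> u i \<and> u i \<le> v i \<and> v i \<le> b) \<Longrightarrow>
       (\<And>i j. i < n \<Longrightarrow> j < n \<Longrightarrow> i \<noteq> j \<Longrightarrow> v i \<le> u j \<or> v j \<le> u i) \<Longrightarrow>
       (\<Sum>i<n. v i - u i) < d \<Longrightarrow> (\<Sum>i<n. norm (f (v i) - f (u i))) < e"
    using abs_continuous_onE[OF assms \<open>0 < e\<close>] by blast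
  have "dist (f y) (f x) < e" if "y \<in> {a..b}" "dist y x < d" for y
  proof -
    have "norm (f (max x y) - f (min x y)) < e"
      using small[of 1 "\<lambda>_. min x y" "\<lambda>_. max x y"] x that by (auto simp: dist_real_def)
    then show ?thesis
      by (cases "x \<le> y") (auto simp: dist_norm norm_minus_commute)
  qed
  with \<open>0 < d\<close> show "\<exists>d>0. \<forall>y\<in>{a..b}. dist y x < d \<longrightarrow> dist (f y) (f x) < e"
    by blast
qed

lemma abs_continuous_on_compose_1_lipschitz:
  assumes "abs_continuous_on a b f" and g: "\<And>x y. norm (g x - g y) \<le> norm (x - y)"
  shows "abs_continuous_on a b (\<lambda>t. g (f t))"
  unfolding abs_continuous_on_def
proof (intro allI impI)
  fix e :: real assume "0 < e"
  then obtain d where "0 < d" and small: "\<And>(n::nat) u v.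
       (\<And>i. i < n \<Longrightarrow> a \<le> u i \<and> u i \<le> v i \<and> v i \<le> b) \<Longrightarrow>
       (\<And>i j. i < n \<Longrightarrow> j < n \<Longrightarrow> i \<noteq> j \<Longrightarrow> v i \<le> u j \<or> v j \<le> u i) \<Longrightarrow>
       (\<Sum>i<n. v i - u i) < d \<Longrightarrow> (\<Sum>i<n. norm (f (v i) - f (u i))) < e"
    using abs_continuous_onE[OF assms(1)] by blast
  have "(\<Sum>i<n. norm (g (f (v i)) - g (f (u i)))) < e"
    if "(\<forall>i<n. a \<le> u i \<and> u i \<le> v i \<and> v i \<le> b) \<and>
        (\<forall>i<n. \<forall>j<n. i \<noteq> j \<longrightarrow> v i \<le> u j \<or> v j \<le> u i) \<and> (\<Sum>i<n. v i - u i) < d"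
    for n :: nat and u v :: "nat \<Rightarrow> real"
  proof -
    have "(\<Sum>i<n. norm (g (f (v i)) - g (f (u i)))) \<le> (\<Sum>i<n. norm (f (v i) - f (u i)))"
      by (intro sum_mono g)
    also have "\<dots> < e"
      using that by (intro small) auto
    finally show ?thesis .
  qed
  with \<open>0 < d\<close> show "\<exists>d>0. \<forall>(n::nat) (u::nat \<Rightarrow> real) v.
      (\<forall>i<n. a \<le> u i \<and> u i \<le> v i \<and> v i \<le> b) \<and>
      (\<forall>i<n. \<forall>j<n. i \<noteq> j \<longrightarrow> v i \<le> u j \<or> v j \<le> u i) \<and> (\<Sum>i<n. v i - u i) < d
      \<longrightarrow> (\<Sum>i<n. norm (g (f (v i)) - g (f (u i)))) < e"
    by blast
qed

lemma sum_interval_lengths_le_measure: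
  fixes u v :: "nat \<Rightarrow> real"
  assumes "\<And>i. i < n \<Longrightarrow> u i \<le> v i"
    and disjoint: "\<And>i j. i < n \<Longrightarrow> j < n \<Longrightarrow> i \<noteq> j \<Longrightarrow> v i \<le> u j \<or> v j \<le> u i"
    and "\<And>i. i < n \<Longrightarrow> {u i..v i} \<subseteq> U" and "U \<in> lmeasurable"
  shows "(\<Sum>i<n. v i - u i) \<le> measure lebesgue U"
proof -
  have "negligible ({u i..v i} \<inter> {u j..v j})" if "i < n" "j < n" "i \<noteq> j" for i j
  proof -
    have "{u i..v i} \<inter> {u j..v j} \<subseteq> {u j, u i}"
      using disjoint[OF that] by auto
    then show ?thesis
      by (rule negligible_subset[rotated]) simp
  qed
  then have "measure lebesgue (\<Union>i<n. {u i..v i}) = (\<Sum>i<n. measure lebesgue {u i..v i})"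
    by (intro measure_negligible_finite_Union_image) (auto simp: pairwise_def)
  also have "\<dots> = (\<Sum>i<n. v i - u i)"
    using assms(1) by simp
  moreover have "measure lebesgue (\<Union>i<n. {u i..v i}) \<le> measure lebesgue U"
    using assms(3,4) by (intro measure_mono_fmeasurable) auto
  ultimately show ?thesis
    by simp
qed

lemma Ioo_disjoint_imp_ordered:
  fixes u v u' v' :: real
  assumes "u < v" "u' < v'" "{u<..<v} \<inter> {u'<..<v'} = {}"
  shows "v \<le> u' \<or> v' \<le> u"
proof (rule ccontr)
  assume "\<not> (v \<le> u' \<or> v' \<le> u)"
  then have "(max u u' + min v v') / 2 \<in> {u<..<v} \<inter> {u'<..<v'}"
    using assms(1,2) by (auto simp: max_def min_def)
  with assms(3) show False
    by blast
qed

lemma tagged_division_of_IccE: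
  assumes "D tagged_division_of {a..b::real}" "p \<in> D"
  obtains u v where "snd p = {u..v}" "u \<le> fst p" "fst p \<le> v" "a \<le> u" "v \<le> b"
proof -
  obtain x K where "p = (x, K)"
    by fastforce
  with tagged_division_ofD(2-4)[OF assms(1)] assms(2) obtain u v
    where "x \<in> K" "K \<subseteq> {a..b}" "K = cbox u v"
    by metis
  with \<open>p = (x, K)\<close> show ?thesis
    by (intro that[of u v]) auto
qed

(* Degenerate intervals of a tagged division may overlap the others, so they are dropped;
   this is harmless for sums of terms phi (Inf K) (Sup K) that vanish on them. *)
lemma tagged_division_of_subset_enumerate:
  assumes D: "D tagged_division_of {a..b::real}" and "D' \<subseteq> D"
  obtains n :: nat and u v :: "nat \<Rightarrow> real" where
    "\<And>i. i < n \<Longrightarrow> a \<le> u i \<and> u i < v i \<and> v i \<le> b"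
    "\<And>i j. i < n \<Longrightarrow> j < n \<Longrightarrow> i \<noteq> j \<Longrightarrow> v i \<le> u j \<or> v j \<le> u i"
    "\<And>i. i < n \<Longrightarrow> \<exists>p\<in>D'. snd p = {u i..v i}"
    "\<And>\<phi> :: real \<Rightarrow> real \<Rightarrow> real. (\<And>c. \<phi> c c = 0) \<Longrightarrow>
       (\<Sum>p\<in>D'. \<phi> (Inf (snd p)) (Sup (snd p))) = (\<Sum>i<n. \<phi> (u i) (v i))"
proof -
  define E where "E = {p \<in> D'. Inf (snd p) < Sup (snd p)}"
  have "finite E"
    using tagged_division_of_finite[OF D] \<open>D' \<subseteq> D\<close> unfolding E_def by (auto intro: finite_subset)
  then obtain \<sigma> where \<sigma>: "bij_betw \<sigma> {..<card E} E"
    using ex_bij_betw_nat_finite lessThan_atLeast0 by metis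
  define u where "u i = Inf (snd (\<sigma> i))" for i
  define v where "v i = Sup (snd (\<sigma> i))" for i
  have \<sigma>E: "\<sigma> i \<in> E" if "i < card E" for i
    using \<sigma> that by (auto simp: bij_betw_def)
  have interval: "snd (\<sigma> i) = {u i..v i} \<and> a \<le> u i \<and> u i < v i \<and> v i \<le> b" if "i < card E" for i
  proof -
    have "\<sigma> i \<in> D" "Inf (snd (\<sigma> i)) < Sup (snd (\<sigma> i))"
      using \<sigma>E[OF that] \<open>D' \<subseteq> D\<close> by (auto simp: E_def)
    moreover obtain x y where "snd (\<sigma> i) = {x..y}" "x \<le> y" "a \<le> x" "y \<le> b"
      using tagged_division_of_IccE[OF D \<open>\<sigma> i \<in> D\<close>] by (metis order_trans)
    ultimately show ?thesis
      by (auto simp: u_def v_def)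
  qed
  show thesis
  proof (rule that[of "card E" u v])
    show "a \<le> u i \<and> u i < v i \<and> v i \<le> b" if "i < card E" for i
      using interval[OF that] by blast
    show "\<exists>p\<in>D'. snd p = {u i..v i}" if "i < card E" for i
      using interval[OF that] \<sigma>E[OF that] by (auto simp: E_def)
    show "v i \<le> u j \<or> v j \<le> u i" if "i < card E" "j < card E" "i \<noteq> j" for i j
    proof (rule Ioo_disjoint_imp_ordered)
      have "\<sigma> i \<noteq> \<sigma> j" "\<sigma> i \<in> D" "\<sigma> j \<in> D"
        using \<sigma> \<sigma>E that \<open>D' \<subseteq> D\<close> by (auto simp: bij_betw_def inj_on_def E_def)
      then have "interior (snd (\<sigma> i)) \<inter> interior (snd (\<sigma> j)) = {}"
        using tagged_division_ofD(5)[OF D, of "fst (\<sigma> i)" "snd (\<sigma> i)" "fst (\<sigma> j)" "snd (\<sigma> j)"]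
        by (simp add: prod_eq_iff)
      then show "{u i<..<v i} \<inter> {u j<..<v j} = {}"
        using interval[OF that(1)] interval[OF that(2)] by simp
    qed (use interval[OF that(1)] interval[OF that(2)] in auto)
    fix \<phi> :: "real \<Rightarrow> real \<Rightarrow> real" assume "\<And>c. \<phi> c c = 0"
    have "\<phi> (Inf (snd p)) (Sup (snd p)) = 0" if "p \<in> D' - E" for p
    proof -
      have "p \<in> D"
        using that \<open>D' \<subseteq> D\<close> by blast
      then obtain x y where "snd p = {x..y}" "x \<le> y"
        using tagged_division_of_IccE[OF D] by (metis order_trans)
      with that show ?thesis
        using \<open>\<And>c. \<phi> c c = 0\<close> by (auto simp: E_def)
    qed
    then have "(\<Sum>p\<in>D'. \<phi> (Inf (snd p)) (Sup (snd p))) = (\<Sum>p\<in>E. \<phi> (Inf (snd p)) (Sup (snd p)))"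
      using tagged_division_of_finite[OF D] \<open>D' \<subseteq> D\<close>
      by (intro sum.mono_neutral_right) (auto simp: E_def intro: finite_subset)
    also have "\<dots> = (\<Sum>i<card E. \<phi> (u i) (v i))"
      using sum.reindex_bij_betw[OF \<sigma>, of "\<lambda>p. \<phi> (Inf (snd p)) (Sup (snd p))"]
      by (simp add: u_def v_def)
    finally show "(\<Sum>p\<in>D'. \<phi> (Inf (snd p)) (Sup (snd p))) = (\<Sum>i<card E. \<phi> (u i) (v i))" .
  qed
qed

lemma abs_continuous_on_tagged_division_sum_less:
  assumes "abs_continuous_on a b f" "0 < e"
  obtains d where "0 < d"
    "\<And>D D' U. D tagged_division_of {a..b} \<Longrightarrow> D' \<subseteq> D \<Longrightarrow> U \<in> lmeasurable \<Longrightarrow>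
       measure lebesgue U < d \<Longrightarrow> (\<And>p. p \<in> D' \<Longrightarrow> snd p \<subseteq> U) \<Longrightarrow>
       (\<Sum>p\<in>D'. norm (f (Sup (snd p)) - f (Inf (snd p)))) < e"
proof -
  obtain d where "0 < d" and small: "\<And>(n::nat) u v.
       (\<And>i. i < n \<Longrightarrow> a \<le> u i \<and> u i \<le> v i \<and> v i \<le> b) \<Longrightarrow>
       (\<And>i j. i < n \<Longrightarrow> j < n \<Longrightarrow> i \<noteq> j \<Longrightarrow> v i \<le> u j \<or> v j \<le> u i) \<Longrightarrow>
       (\<Sum>i<n. v i - u i) < d \<Longrightarrow> (\<Sum>i<n. norm (f (v i) - f (u i))) < e"
    using abs_continuous_onE[OF assms] by blast
  show thesis
  proof (rule that[OF \<open>0 < d\<close>])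
    fix D D' U
    assume D: "D tagged_division_of {a..b}" and "D' \<subseteq> D" and U: "U \<in> lmeasurable"
      "measure lebesgue U < d" and D'U: "\<And>p. p \<in> D' \<Longrightarrow> snd p \<subseteq> U"
    show "(\<Sum>p\<in>D'. norm (f (Sup (snd p)) - f (Inf (snd p)))) < e"
    proof (rule tagged_division_of_subset_enumerate[OF D \<open>D' \<subseteq> D\<close>])
      fix n :: nat and u v :: "nat \<Rightarrow> real"
      assume uv: "\<And>i. i < n \<Longrightarrow> a \<le> u i \<and> u i < v i \<and> v i \<le> b"
        and disjoint: "\<And>i j. i < n \<Longrightarrow> j < n \<Longrightarrow> i \<noteq> j \<Longrightarrow> v i \<le> u j \<or> v j \<le> u i"
        and in_D': "\<And>i. i < n \<Longrightarrow> \<exists>p\<in>D'. snd p = {u i..v i}"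
        and sum_eq: "\<And>\<phi> :: real \<Rightarrow> real \<Rightarrow> real. (\<And>c. \<phi> c c = 0) \<Longrightarrow>
          (\<Sum>p\<in>D'. \<phi> (Inf (snd p)) (Sup (snd p))) = (\<Sum>i<n. \<phi> (u i) (v i))"
      have "(\<Sum>i<n. v i - u i) \<le> measure lebesgue U"
      proof (rule sum_interval_lengths_le_measure)
        show "u i \<le> v i" if "i < n" for i
          using uv[OF that] by simp
        show "{u i..v i} \<subseteq> U" if "i < n" for i
          using in_D'[OF that] D'U by blast
      qed (use disjoint U(1) in auto)
      then have "(\<Sum>i<n. norm (f (v i) - f (u i))) < e"
        using uv disjoint U(2) by (intro small) (auto simp: less_imp_le)
      then show "(\<Sum>p\<in>D'. norm (f (Sup (snd p)) - f (Inf (snd p)))) < e"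
        using sum_eq[of "\<lambda>x y. norm (f y - f x)"] by simp
    qed
  qed
qed

lemma has_vector_derivative_local_bound:
  fixes f :: "real \<Rightarrow> 'a::real_normed_vector"
  assumes "(f has_vector_derivative f') (at x)" "0 < e"
  obtains r where "0 < r" "\<And>y. \<bar>y - x\<bar> < r \<Longrightarrow> norm (f y - f x) \<le> (norm f' + e) * \<bar>y - x\<bar>"
proof -
  obtain r where "0 < r" and r: "\<And>y. norm (y - x) < r \<Longrightarrow>
      norm (f y - f x - (y - x) *\<^sub>R f') \<le> e * norm (y - x)"
    using assms unfolding has_vector_derivative_def has_derivative_at_alt by blast
  have "norm (f y - f x) \<le> (norm f' + e) * \<bar>y - x\<bar>" if "\<bar>y - x\<bar> < r" for y
  proof -
    have "norm (f y - f x) \<le> norm ((y - x) *\<^sub>R f') + norm (f y - f x - (y - x) *\<^sub>R f')"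
      by (rule norm_triangle_sub)
    also have "\<dots> \<le> \<bar>y - x\<bar> * norm f' + e * \<bar>y - x\<bar>"
      using r[of y] that by simp
    finally show ?thesis
      by (simp add: algebra_simps)
  qed
  with \<open>0 < r\<close> show thesis
    by (rule that)
qed

lemma null_sets_lebesgue_open_cover:
  assumes "N \<in> null_sets lebesgue" "0 < d"
  obtains U where "open U" "N \<subseteq> U" "U \<in> lmeasurable" "measure lebesgue U < d"
proof -
  obtain U where "open U" "N \<subseteq> U" "U - N \<in> lmeasurable" "emeasure lebesgue (U - N) < ennreal d"
    using sets_lebesgue_outer_open[of N d] assms by auto
  moreover have "emeasure lebesgue U = emeasure lebesgue (U - N)"
    using assms(1) \<open>open U\<close> by (simp add: emeasure_Diff_null_set)
  ultimately have "emeasure lebesgue U < ennreal d"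
    by simp
  moreover have "U \<in> sets lebesgue"
    using \<open>open U\<close> by simp
  ultimately have "U \<in> lmeasurable" "emeasure lebesgue U < ennreal d"
    by (auto intro!: fmeasurableI order.strict_trans[OF _ ennreal_less_top])
  moreover from this have "measure lebesgue U < d"
    by (simp add: emeasure_eq_measure2 ennreal_less_iff)
  ultimately show thesis
    using \<open>open U\<close> \<open>N \<subseteq> U\<close> that by blast
qed

lemma tagged_division_increment_le:
  fixes f :: "real \<Rightarrow> 'a::real_normed_vector"
  assumes "D tagged_division_of {a..b}" "p \<in> D"
    and bound: "\<And>y. y \<in> snd p \<Longrightarrow> norm (f y - f (fst p)) \<le> c * \<bar>y - fst p\<bar>"
  shows "norm (f (Sup (snd p)) - f (Inf (snd p))) \<le> (Sup (snd p) - Inf (snd p)) * c"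
proof -
  obtain u v where uv: "snd p = {u..v}" "u \<le> fst p" "fst p \<le> v"
    using tagged_division_of_IccE[OF assms(1,2)] by metis
  have "norm (f v - f u) \<le> norm (f v - f (fst p)) + norm (f u - f (fst p))"
    using norm_triangle_ineq4[of "f v - f (fst p)" "f u - f (fst p)"] by simp
  also have "\<dots> \<le> c * (v - fst p) + c * (fst p - u)"
    using bound[of v] bound[of u] uv by (auto intro: add_mono)
  finally show ?thesis
    using uv by (simp add: algebra_simps)
qed

(* content has to be qualified: unqualified it denotes the content of a polynomial. *)
lemma tagged_division_sum_le_integral:
  fixes g :: "real \<Rightarrow> real"
  assumes D: "D tagged_division_of {a..b}" and "D' \<subseteq> D" "a \<le> b" "0 \<le> e"
    and g: "\<And>x. x \<in> {a..b} \<Longrightarrow> 0 \<le> g x"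
    and riemann: "\<bar>(\<Sum>(x, K)\<in>D. Henstock_Kurzweil_Integration.content K * g x)
      - integral {a..b} g\<bar> < e"
  shows "(\<Sum>p\<in>D'. (Sup (snd p) - Inf (snd p)) * (g (fst p) + e))
    \<le> integral {a..b} g + e * (b - a + 1)"
proof -
  have tag: "Henstock_Kurzweil_Integration.content (snd p) = Sup (snd p) - Inf (snd p)
      \<and> 0 \<le> Sup (snd p) - Inf (snd p) \<and> 0 \<le> g (fst p)" if p: "p \<in> D" for p
  proof -
    obtain u v where "snd p = {u..v}" "u \<le> fst p" "fst p \<le> v" "a \<le> u" "v \<le> b"
      using tagged_division_of_IccE[OF D p] .
    then show ?thesis
      using g[of "fst p"] by auto
  qed
  have "(\<Sum>p\<in>D'. (Sup (snd p) - Inf (snd p)) * (g (fst p) + e))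
      \<le> (\<Sum>p\<in>D. (Sup (snd p) - Inf (snd p)) * (g (fst p) + e))"
    using tag \<open>D' \<subseteq> D\<close> \<open>0 \<le> e\<close> tagged_division_of_finite[OF D] by (intro sum_mono2) auto
  also have "\<dots> = (\<Sum>p\<in>D. Henstock_Kurzweil_Integration.content (snd p) * g (fst p)
      + e * Henstock_Kurzweil_Integration.content (snd p))"
  proof (rule sum.cong)
    fix p assume "p \<in> D"
    then have content: "Henstock_Kurzweil_Integration.content (snd p) = Sup (snd p) - Inf (snd p)"
      using tag by blast
    show "(Sup (snd p) - Inf (snd p)) * (g (fst p) + e)
        = Henstock_Kurzweil_Integration.content (snd p) * g (fst p)
          + e * Henstock_Kurzweil_Integration.content (snd p)"
      unfolding content by (simp add: algebra_simps)
  qed simp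
  also have "\<dots> = (\<Sum>(x, K)\<in>D. Henstock_Kurzweil_Integration.content K * g x)
      + e * (\<Sum>(x, K)\<in>D. Henstock_Kurzweil_Integration.content K)"
    by (simp add: split_def sum.distrib sum_distrib_left)
  also have "(\<Sum>(x, K)\<in>D. Henstock_Kurzweil_Integration.content K) = b - a"
    using additive_content_tagged_division[of D a b] D \<open>a \<le> b\<close> by simp
  finally show ?thesis
    using riemann by (simp add: algebra_simps)
qed

lemma local_increment_radius:
  fixes f :: "real \<Rightarrow> 'a::real_normed_vector"
  assumes "open U" "N \<subseteq> U" "0 < e"
    and deriv: "\<And>x. x \<in> {a..b} \<Longrightarrow> x \<notin> N \<Longrightarrow>
      \<exists>f'. (f has_vector_derivative f') (at x) \<and> norm f' \<le> g x"
  obtains r where "\<And>x. 0 < r x" "\<And>x. x \<in> N \<Longrightarrow> ball x (r x) \<subseteq> U"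
    "\<And>x y. x \<in> {a..b} - N \<Longrightarrow> \<bar>y - x\<bar> < r x \<Longrightarrow> norm (f y - f x) \<le> (g x + e) * \<bar>y - x\<bar>"
proof -
  have "\<exists>r>0. (x \<in> N \<longrightarrow> ball x r \<subseteq> U) \<and> (x \<in> {a..b} - N \<longrightarrow>
      (\<forall>y. \<bar>y - x\<bar> < r \<longrightarrow> norm (f y - f x) \<le> (g x + e) * \<bar>y - x\<bar>))" for x
  proof (cases "x \<in> {a..b} - N")
    case True
    then obtain f' where f': "(f has_vector_derivative f') (at x)" "norm f' \<le> g x"
      using deriv by blast
    obtain r where "0 < r"
      and r: "\<And>y. \<bar>y - x\<bar> < r \<Longrightarrow> norm (f y - f x) \<le> (norm f' + e) * \<bar>y - x\<bar>"
      using has_vector_derivative_local_bound[OF f'(1) \<open>0 < e\<close>] by blast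
    have "norm (f y - f x) \<le> (g x + e) * \<bar>y - x\<bar>" if "\<bar>y - x\<bar> < r" for y
      using r[OF that] f'(2) by (meson abs_ge_zero add_right_mono mult_right_mono order_trans)
    with True \<open>0 < r\<close> show ?thesis
      by auto
  next
    case False
    then show ?thesis
      using assms(1,2) by (cases "x \<in> N") (auto simp: open_contains_ball intro: exI[of _ 1])
  qed
  then show thesis
    using that by metis
qed

(* Gauge argument: at tags outside the null set N the derivative bound controls the increment;
   the intervals tagged in N lie in an open set of small measure, where absolute continuity
   controls their total increment. *)
lemma abs_continuous_on_norm_diff_le_integral:
  fixes f :: "real \<Rightarrow> 'a::real_normed_vector" and g :: "real \<Rightarrow> real"
  assumes "a \<le> b" and AC: "abs_continuous_on a b f"
    and deriv: "AE x in lebesgue. x \<in> {a..b} \<longrightarrow>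
      (\<exists>f'. (f has_vector_derivative f') (at x) \<and> norm f' \<le> g x)"
    and g_cont: "continuous_on {a..b} g" and g_nonneg: "\<And>x. x \<in> {a..b} \<Longrightarrow> 0 \<le> g x"
  shows "norm (f b - f a) \<le> integral {a..b} g"
proof (rule field_le_epsilon)
  fix e :: real assume "0 < e"
  define \<epsilon> where "\<epsilon> = e / (b - a + 3)"
  have "0 < \<epsilon>" "\<epsilon> * (b - a + 3) = e"
    using \<open>a \<le> b\<close> \<open>0 < e\<close> by (simp_all add: \<epsilon>_def)
  obtain N where N: "N \<in> null_sets lebesgue" and deriv_N: "\<And>x. x \<in> {a..b} \<Longrightarrow> x \<notin> N \<Longrightarrow>
      \<exists>f'. (f has_vector_derivative f') (at x) \<and> norm f' \<le> g x"
    using deriv by (auto elim!: AE_E3)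
  obtain d where "0 < d" and small: "\<And>D D' U. D tagged_division_of {a..b} \<Longrightarrow> D' \<subseteq> D \<Longrightarrow>
      U \<in> lmeasurable \<Longrightarrow> measure lebesgue U < d \<Longrightarrow> (\<And>p. p \<in> D' \<Longrightarrow> snd p \<subseteq> U) \<Longrightarrow>
      (\<Sum>p\<in>D'. norm (f (Sup (snd p)) - f (Inf (snd p)))) < \<epsilon>"
    using abs_continuous_on_tagged_division_sum_less[OF AC \<open>0 < \<epsilon>\<close>] by blast
  obtain U where "open U" "N \<subseteq> U" "U \<in> lmeasurable" "measure lebesgue U < d"
    using null_sets_lebesgue_open_cover[OF N \<open>0 < d\<close>] .
  obtain \<gamma>\<^sub>0 where "gauge \<gamma>\<^sub>0" and riemann: "\<And>D. D tagged_division_of {a..b} \<Longrightarrow> \<gamma>\<^sub>0 fine D \<Longrightarrow>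
      \<bar>(\<Sum>(x, K)\<in>D. Henstock_Kurzweil_Integration.content K * g x) - integral {a..b} g\<bar> < \<epsilon>"
    using integrable_integral[OF integrable_continuous_real[OF g_cont]] \<open>0 < \<epsilon>\<close>
    unfolding has_integral_real by (auto simp: split_def)
  obtain r where "\<And>x. 0 < r x" and r_U: "\<And>x. x \<in> N \<Longrightarrow> ball x (r x) \<subseteq> U"
    and r_bound: "\<And>x y. x \<in> {a..b} - N \<Longrightarrow> \<bar>y - x\<bar> < r x \<Longrightarrow>
      norm (f y - f x) \<le> (g x + \<epsilon>) * \<bar>y - x\<bar>"
    using local_increment_radius[OF \<open>open U\<close> \<open>N \<subseteq> U\<close> \<open>0 < \<epsilon>\<close> deriv_N] by metis
  obtain D where D: "D tagged_division_of {a..b}" and fine: "(\<lambda>x. \<gamma>\<^sub>0 x \<inter> ball x (r x)) fine D"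
    using fine_division_exists_real[of "\<lambda>x. \<gamma>\<^sub>0 x \<inter> ball x (r x)"] \<open>gauge \<gamma>\<^sub>0\<close> \<open>\<And>x. 0 < r x\<close>
    by (metis gauge_Int gauge_ball_dependent)
  have in_ball: "snd p \<subseteq> ball (fst p) (r (fst p))" if "p \<in> D" for p
    using fine that unfolding fine_def by fastforce
  define h where "h p = norm (f (Sup (snd p)) - f (Inf (snd p)))" for p :: "real \<times> real set"
  define D\<^sub>N where "D\<^sub>N = {p \<in> D. fst p \<in> N}"
  have "norm (f b - f a) \<le> (\<Sum>p\<in>D. h p)"
    using additive_tagged_division_1[OF \<open>a \<le> b\<close> D, of f]
      norm_sum[of "\<lambda>p. f (Sup (snd p)) - f (Inf (snd p))" D]
    by (simp add: h_def split_def)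
  also have "\<dots> = (\<Sum>p\<in>D - D\<^sub>N. h p) + (\<Sum>p\<in>D\<^sub>N. h p)"
    using tagged_division_of_finite[OF D] by (intro sum.subset_diff) (auto simp: D\<^sub>N_def)
  also have "(\<Sum>p\<in>D - D\<^sub>N. h p) \<le> (\<Sum>p\<in>D - D\<^sub>N. (Sup (snd p) - Inf (snd p)) * (g (fst p) + \<epsilon>))"
  proof (rule sum_mono)
    fix p assume p: "p \<in> D - D\<^sub>N"
    have "fst p \<in> {a..b}"
      using tagged_division_of_IccE[OF D, of p] p by (metis DiffD1 atLeastAtMost_iff order_trans)
    then show "h p \<le> (Sup (snd p) - Inf (snd p)) * (g (fst p) + \<epsilon>)"
      unfolding h_def using p in_ball[of p] r_bound[of "fst p"]
      by (intro tagged_division_increment_le[OF D])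
        (auto simp: D\<^sub>N_def dist_real_def abs_minus_commute)
  qed
  also have "\<dots> \<le> integral {a..b} g + \<epsilon> * (b - a + 1)"
    using D \<open>a \<le> b\<close> \<open>0 < \<epsilon>\<close> g_nonneg riemann[OF D] fine
    by (intro tagged_division_sum_le_integral) (auto simp: fine_Int)
  also have "(\<Sum>p\<in>D\<^sub>N. h p) < \<epsilon>"
  proof -
    have "snd p \<subseteq> U" if "p \<in> D\<^sub>N" for p
      using in_ball[of p] r_U[of "fst p"] that unfolding D\<^sub>N_def by blast
    then show ?thesis
      unfolding h_def using D \<open>U \<in> lmeasurable\<close> \<open>measure lebesgue U < d\<close>
      by (intro small[of D]) (auto simp: D\<^sub>N_def)
  qed
  finally show "norm (f b - f a) \<le> integral {a..b} g + e"
    using \<open>\<epsilon> * (b - a + 3) = e\<close> \<open>0 < \<epsilon>\<close> by (simp add: algebra_simps)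
qed

section \<open>Gronwall inequalities\<close>

lemma continuous_on_indefinite_integral:
  "continuous_on {a..b} f \<Longrightarrow> continuous_on {a..b} (\<lambda>x. integral {a..x} (f :: real \<Rightarrow> real))"
  by (intro indefinite_integral_continuous_1 integrable_continuous_real)

lemma integrable_on_initial_segment:
  "continuous_on {a..b} f \<Longrightarrow> s \<in> {a..b} \<Longrightarrow> (f :: real \<Rightarrow> real) integrable_on {a..s}"
  by (rule integrable_continuous_real, erule continuous_on_subset) auto

lemma indefinite_integral_has_real_derivative:
  assumes "continuous_on {a..b} f" "s \<in> {a<..<b}"
  shows "((\<lambda>x. integral {a..x} f) has_real_derivative f s) (at s)"
proof -
  have "at s within {a..b} = at s"
    using assms(2) by (intro at_within_interior) auto
  then show ?thesis
    using integral_has_real_derivative[OF assms(1), of s] assms(2) by simp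
qed

lemma indefinite_integral_mono:
  fixes f :: "real \<Rightarrow> real"
  assumes "continuous_on {a..b} f" "\<And>x. x \<in> {a..b} \<Longrightarrow> 0 \<le> f x" "r \<le> s" "s \<le> b"
  shows "integral {a..r} f \<le> integral {a..s} f"
proof (cases "a \<le> r")
  case True
  with assms show ?thesis
    by (intro integral_subset_le integrable_continuous_real continuous_on_subset[OF assms(1)]) auto
next
  case False
  with assms show ?thesis
    by (cases "a \<le> s") (auto intro!: integral_nonneg integrable_continuous_real
        continuous_on_subset[OF assms(1)])
qed

lemma integral_mult_indefinite_integral:
  fixes L :: "real \<Rightarrow> real"
  assumes "a \<le> b" "continuous_on {a..b} L"
  shows "integral {a..b} (\<lambda>r. L r * integral {a..r} L) = (integral {a..b} L)\<^sup>2 / 2"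
proof -
  define S where "S r = integral {a..r} L" for r
  have "((\<lambda>r. L r * S r) has_integral (S b)\<^sup>2 / 2 - (S a)\<^sup>2 / 2) {a..b}"
  proof (rule fundamental_theorem_of_calculus_interior)
    show "continuous_on {a..b} (\<lambda>r. (S r)\<^sup>2 / 2)"
      unfolding S_def by (intro continuous_intros continuous_on_indefinite_integral assms(2)) simp
    fix r assume "r \<in> {a<..<b}"
    then have "(S has_real_derivative L r) (at r)"
      unfolding S_def by (rule indefinite_integral_has_real_derivative[OF assms(2)])
    then have "((\<lambda>r. (S r)\<^sup>2 / 2) has_real_derivative L r * S r) (at r)"
      by (auto intro!: derivative_eq_intros)
    then show "((\<lambda>r. (S r)\<^sup>2 / 2) has_vector_derivative L r * S r) (at r)"
      by (simp add: has_real_derivative_iff_has_vector_derivative)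
  qed (use assms(1) in auto)
  then show ?thesis
    by (simp add: integral_unique S_def)
qed

lemma exp_minus_one_le: "0 \<le> (x::real) \<Longrightarrow> exp x - 1 \<le> x * exp x"
proof -
  have "1 - x \<le> exp (- x)"
    using exp_ge_add_one_self[of "- x"] by simp
  then have "(1 - x) * exp x \<le> 1"
    by (metis exp_gt_zero exp_minus_inverse mult.commute mult_right_mono less_imp_le)
  then show ?thesis
    by (simp add: algebra_simps)
qed

lemma gronwall_linear:
  fixes P a b :: "real \<Rightarrow> real"
  assumes "0 \<le> t" and P_cont: "continuous_on {0..t} P"
    and a_cont: "continuous_on {0..t} a" and b_cont: "continuous_on {0..t} b"
    and a_nonneg: "\<And>s. s \<in> {0..t} \<Longrightarrow> 0 \<le> a s" and b_nonneg: "\<And>s. s \<in> {0..t} \<Longrightarrow> 0 \<le> b s"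
    and deriv: "\<And>s. s \<in> {0<..<t} \<Longrightarrow> \<exists>P'. (P has_real_derivative P') (at s) \<and> P' \<le> a s + b s * P s"
  shows "P t \<le> exp (integral {0..t} b) * (P 0 + integral {0..t} a)"
proof -
  define A where "A s = integral {0..s} a" for s
  define B where "B s = integral {0..s} b" for s
  define G where "G s = A s - P s * exp (- B s)" for s
  have "G 0 \<le> G t"
  proof (rule DERIV_nonneg_imp_increasing_open[OF \<open>0 \<le> t\<close>])
    show "continuous_on {0..t} G"
      unfolding G_def A_def B_def
      by (intro continuous_intros continuous_on_indefinite_integral P_cont a_cont b_cont)
    fix s assume s: "0 < s" "s < t"
    obtain P' where P': "(P has_real_derivative P') (at s)" "P' \<le> a s + b s * P s"
      using deriv s by auto
    have "(A has_real_derivative a s) (at s)" "(B has_real_derivative b s) (at s)"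
      unfolding A_def B_def using s
      by (auto intro!: indefinite_integral_has_real_derivative a_cont b_cont)
    then have G': "(G has_real_derivative a s - (P' - b s * P s) * exp (- B s)) (at s)"
      unfolding G_def using P'(1) by (auto intro!: derivative_eq_intros simp: algebra_simps)
    have "0 \<le> B s"
      unfolding B_def using s b_nonneg
      by (intro integral_nonneg integrable_continuous_real continuous_on_subset[OF b_cont]) auto
    then have "(P' - b s * P s) * exp (- B s) \<le> a s * exp (- B s)"
      using P'(2) by (intro mult_right_mono) auto
    also have "\<dots> \<le> a s"
      using \<open>0 \<le> B s\<close> a_nonneg[of s] s by (intro mult_left_le) auto
    finally show "\<exists>y. (G has_real_derivative y) (at s) \<and> 0 \<le> y"
      using G' by (intro exI conjI) auto
  qed
  then have "P t * exp (- B t) \<le> P 0 + A t"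
    by (simp add: G_def A_def B_def)
  then have "P t * exp (- B t) * exp (B t) \<le> (P 0 + A t) * exp (B t)"
    by (intro mult_right_mono) auto
  then show ?thesis
    by (simp add: A_def B_def exp_minus field_simps)
qed

lemma gronwall_integral:
  fixes p \<beta> :: "real \<Rightarrow> real"
  assumes "0 \<le> t" and p_cont: "continuous_on {0..t} p" and \<beta>_cont: "continuous_on {0..t} \<beta>"
    and \<beta>_nonneg: "\<And>s. s \<in> {0..t} \<Longrightarrow> 0 \<le> \<beta> s"
    and p_le: "\<And>s. s \<in> {0..t} \<Longrightarrow> p s \<le> c + integral {0..s} (\<lambda>r. \<beta> r * p r)"
  shows "c + integral {0..t} (\<lambda>r. \<beta> r * p r) \<le> c * exp (integral {0..t} \<beta>)"
proof -
  define Q where "Q s = c + integral {0..s} (\<lambda>r. \<beta> r * p r)" for s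
  have \<beta>p_cont: "continuous_on {0..t} (\<lambda>r. \<beta> r * p r)"
    by (intro continuous_intros p_cont \<beta>_cont)
  have "Q t \<le> exp (integral {0..t} \<beta>) * (Q 0 + integral {0..t} (\<lambda>_. 0))"
  proof (rule gronwall_linear[OF \<open>0 \<le> t\<close>])
    show "continuous_on {0..t} Q"
      unfolding Q_def by (intro continuous_intros continuous_on_indefinite_integral \<beta>p_cont)
    fix s assume s: "s \<in> {0<..<t}"
    have "(Q has_real_derivative \<beta> s * p s) (at s)"
      unfolding Q_def using s \<beta>p_cont
      by (intro DERIV_add_const indefinite_integral_has_real_derivative)
    moreover have "\<beta> s * p s \<le> 0 + \<beta> s * Q s"
      using p_le[of s] \<beta>_nonneg[of s] s unfolding Q_def by (simp add: mult_left_mono)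
    ultimately show "\<exists>Q'. (Q has_real_derivative Q') (at s) \<and> Q' \<le> 0 + \<beta> s * Q s"
      by blast
  qed (use \<beta>_cont \<beta>_nonneg in auto)
  then show ?thesis
    by (simp add: Q_def mult.commute)
qed

section \<open>Two mutually controlled displacements\<close>

locale coupled_growth =
  fixes W :: "real \<Rightarrow> 'a::real_normed_vector" and V :: "real \<Rightarrow> 'b::real_normed_vector"
    and L :: "real \<Rightarrow> real" and k t :: real
  assumes t_nonneg: "0 \<le> t" and k_nonneg: "0 \<le> k"
    and W_cont: "continuous_on {0..t} W" and V_cont: "continuous_on {0..t} V"
    and L_cont: "continuous_on {0..t} L" and L_nonneg: "\<And>s. s \<in> {0..t} \<Longrightarrow> 0 \<le> L s"
    and W_growth: "\<And>s. s \<in> {0..t} \<Longrightarrow> norm (W s - W 0) \<le> integral {0..s} (\<lambda>r. k * L r * norm (V r))"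
    and V_growth: "\<And>s. s \<in> {0..t} \<Longrightarrow> norm (V s - V 0) \<le> integral {0..s} (\<lambda>r. k * L r * norm (W r))"
begin

lemma displacement_sum_bound:
  "norm (W t - W 0) + norm (V t - V 0)
     \<le> k * (norm (W 0) + norm (V 0)) * integral {0..t} L * exp (k * integral {0..t} L)"
proof -
  define p where "p r = norm (V r) + norm (W r)" for r
  define S where "S = integral {0..t} L"
  have kLV_cont: "continuous_on {0..t} (\<lambda>r. k * L r * norm (V r))"
    and kLW_cont: "continuous_on {0..t} (\<lambda>r. k * L r * norm (W r))"
    and p_cont: "continuous_on {0..t} p"
    unfolding p_def by (intro continuous_intros L_cont V_cont W_cont)+
  have growth: "norm (W s - W 0) + norm (V s - V 0) \<le> integral {0..s} (\<lambda>r. k * L r * p r)"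
    if "s \<in> {0..t}" for s
  proof -
    have "integral {0..s} (\<lambda>r. k * L r * p r)
        = integral {0..s} (\<lambda>r. k * L r * norm (V r)) + integral {0..s} (\<lambda>r. k * L r * norm (W r))"
      unfolding p_def distrib_left
      by (intro integral_add integrable_on_initial_segment[OF _ that] kLV_cont kLW_cont)
    then show ?thesis
      using W_growth[OF that] V_growth[OF that] by simp
  qed
  have "p 0 + integral {0..t} (\<lambda>r. k * L r * p r) \<le> p 0 * exp (integral {0..t} (\<lambda>r. k * L r))"
  proof (rule gronwall_integral[OF t_nonneg p_cont])
    show "continuous_on {0..t} (\<lambda>r. k * L r)"
      by (intro continuous_intros L_cont)
    show "0 \<le> k * L s" if "s \<in> {0..t}" for s
      using k_nonneg L_nonneg[OF that] by simp
    show "p s \<le> p 0 + integral {0..s} (\<lambda>r. k * L r * p r)" if "s \<in> {0..t}" for s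
      using growth[OF that] norm_triangle_sub[of "W s" "W 0"] norm_triangle_sub[of "V s" "V 0"]
      unfolding p_def by linarith
  qed
  moreover have "0 \<le> k * S"
    unfolding S_def using k_nonneg L_nonneg
    by (intro mult_nonneg_nonneg integral_nonneg integrable_continuous_real L_cont) auto
  ultimately have "integral {0..t} (\<lambda>r. k * L r * p r) \<le> p 0 * (exp (k * S) - 1)"
    by (simp add: S_def algebra_simps)
  also have "\<dots> \<le> p 0 * (k * S * exp (k * S))"
    using exp_minus_one_le[OF \<open>0 \<le> k * S\<close>] by (intro mult_left_mono) (simp_all add: p_def)
  finally show ?thesis
    using growth[of t] t_nonneg by (simp add: p_def S_def algebra_simps)
qed

definition majorant :: "real \<Rightarrow> real" where
  "majorant s = integral {0..s} (\<lambda>r. k * L r * (norm (V 0) + norm (V r - V 0)))"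

lemma continuous_on_majorant_integrand:
  "continuous_on {0..t} (\<lambda>r. k * L r * (norm (V 0) + norm (V r - V 0)))"
  by (intro continuous_intros L_cont V_cont)

lemma fst_displacement_le_majorant:
  assumes s: "s \<in> {0..t}"
  shows "norm (W s - W 0) \<le> majorant s"
proof -
  have "integral {0..s} (\<lambda>r. k * L r * norm (V r)) \<le> majorant s"
    unfolding majorant_def
  proof (rule integral_le)
    show "(\<lambda>r. k * L r * norm (V r)) integrable_on {0..s}"
      "(\<lambda>r. k * L r * (norm (V 0) + norm (V r - V 0))) integrable_on {0..s}"
      by (intro integrable_on_initial_segment[OF _ s] continuous_on_majorant_integrand
          continuous_intros L_cont V_cont)+
    show "k * L r * norm (V r) \<le> k * L r * (norm (V 0) + norm (V r - V 0))" if "r \<in> {0..s}" for r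
      using k_nonneg L_nonneg[of r] that s norm_triangle_sub[of "V r" "V 0"]
      by (intro mult_left_mono) auto
  qed
  then show ?thesis
    using W_growth[OF s] by simp
qed

lemma majorant_mono: "r \<le> s \<Longrightarrow> s \<le> t \<Longrightarrow> majorant r \<le> majorant s"
  unfolding majorant_def using k_nonneg L_nonneg
  by (intro indefinite_integral_mono[OF continuous_on_majorant_integrand]) auto

lemma snd_displacement_le:
  assumes s: "s \<in> {0..t}"
  shows "norm (V s - V 0) \<le> k * integral {0..s} L * (norm (W 0) + majorant s)"
proof -
  have "integral {0..s} (\<lambda>r. k * L r * norm (W r))
      \<le> integral {0..s} (\<lambda>r. (k * (norm (W 0) + majorant s)) * L r)"
  proof (rule integral_le)
    show "(\<lambda>r. k * L r * norm (W r)) integrable_on {0..s}"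
      "(\<lambda>r. (k * (norm (W 0) + majorant s)) * L r) integrable_on {0..s}"
      by (intro integrable_on_initial_segment[OF _ s] continuous_intros L_cont W_cont)+
    fix r assume r: "r \<in> {0..s}"
    have "norm (W r) \<le> norm (W 0) + majorant s"
      using norm_triangle_sub[of "W r" "W 0"] fst_displacement_le_majorant[of r]
        majorant_mono[of r s] r s
      by auto
    then have "k * L r * norm (W r) \<le> k * L r * (norm (W 0) + majorant s)"
      using k_nonneg L_nonneg[of r] r s by (intro mult_left_mono) auto
    then show "k * L r * norm (W r) \<le> (k * (norm (W 0) + majorant s)) * L r"
      by (simp add: mult_ac)
  qed
  then show ?thesis
    using V_growth[OF s] by (simp add: mult_ac)
qed

lemma majorant_le:
  "majorant t \<le> exp (k\<^sup>2 * (integral {0..t} L)\<^sup>2 / 2)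
     * (k * norm (V 0) * integral {0..t} L + k\<^sup>2 * norm (W 0) * (integral {0..t} L)\<^sup>2 / 2)"
proof -
  define S where "S s = integral {0..s} L" for s
  define a where "a r = k * norm (V 0) * L r + k\<^sup>2 * norm (W 0) * (L r * S r)" for r
  define b where "b r = k\<^sup>2 * (L r * S r)" for r
  have S_cont: "continuous_on {0..t} S"
    unfolding S_def by (rule continuous_on_indefinite_integral[OF L_cont])
  have S_nonneg: "0 \<le> S r" if "r \<in> {0..t}" for r
    unfolding S_def using that L_nonneg
    by (intro integral_nonneg integrable_on_initial_segment[OF L_cont]) auto
  have "majorant t \<le> exp (integral {0..t} b) * (majorant 0 + integral {0..t} a)"
  proof (rule gronwall_linear[OF t_nonneg])
    show "continuous_on {0..t} majorant"
      unfolding majorant_def[abs_def]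
      by (rule continuous_on_indefinite_integral[OF continuous_on_majorant_integrand])
    show "continuous_on {0..t} a" "continuous_on {0..t} b"
      unfolding a_def b_def by (intro continuous_intros L_cont S_cont)+
    show "0 \<le> a r" "0 \<le> b r" if "r \<in> {0..t}" for r
      unfolding a_def b_def using k_nonneg L_nonneg[OF that] S_nonneg[OF that] by simp_all
    fix r assume r: "r \<in> {0<..<t}"
    have "(majorant has_real_derivative k * L r * (norm (V 0) + norm (V r - V 0))) (at r)"
      unfolding majorant_def[abs_def] using r
      by (rule indefinite_integral_has_real_derivative[OF continuous_on_majorant_integrand])
    moreover have "k * L r * (norm (V 0) + norm (V r - V 0))
        \<le> k * L r * (norm (V 0) + k * S r * (norm (W 0) + majorant r))"
      using snd_displacement_le[of r] r k_nonneg L_nonneg[of r]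
      by (intro mult_left_mono) (auto simp: S_def)
    moreover have "\<dots> = a r + b r * majorant r"
      unfolding a_def b_def by (simp add: algebra_simps power2_eq_square)
    ultimately show "\<exists>P'. (majorant has_real_derivative P') (at r) \<and> P' \<le> a r + b r * majorant r"
      by auto
  qed
  moreover have LS: "integral {0..t} (\<lambda>r. L r * S r) = (S t)\<^sup>2 / 2"
    unfolding S_def by (rule integral_mult_indefinite_integral[OF t_nonneg L_cont])
  then have "integral {0..t} b = k\<^sup>2 * (S t)\<^sup>2 / 2"
    unfolding b_def by simp
  moreover have "integral {0..t} a = k * norm (V 0) * S t + k\<^sup>2 * norm (W 0) * (S t)\<^sup>2 / 2"
  proof -
    have "integral {0..t} a = integral {0..t} (\<lambda>r. k * norm (V 0) * L r)
        + integral {0..t} (\<lambda>r. k\<^sup>2 * norm (W 0) * (L r * S r))"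
      unfolding a_def
      by (intro integral_add integrable_continuous_real continuous_intros L_cont S_cont)
    then show ?thesis
      using LS by (simp add: S_def)
  qed
  ultimately show ?thesis
    by (simp add: majorant_def S_def)
qed

lemma displacement_fst_bound:
  "norm (W t - W 0)
     \<le> (k * norm (V 0) * integral {0..t} L + k\<^sup>2 * norm (W 0) * (integral {0..t} L)\<^sup>2 / 2)
       * exp (k\<^sup>2 * (integral {0..t} L)\<^sup>2 / 2)"
  using fst_displacement_le_majorant[of t] majorant_le t_nonneg by (simp add: mult.commute)

end

section \<open>The gradient flow\<close>

lemma has_vector_derivative_fst:
  "(f has_vector_derivative f') F \<Longrightarrow> ((\<lambda>x. fst (f x)) has_vector_derivative fst f') F"
  unfolding has_vector_derivative_def by (drule has_derivative_fst) simp

lemma has_vector_derivative_snd: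
  "(f has_vector_derivative f') F \<Longrightarrow> ((\<lambda>x. snd (f x)) has_vector_derivative snd f') F"
  unfolding has_vector_derivative_def by (drule has_derivative_snd) simp

lemma gradient_flow_layer_growth:
  fixes X :: "real^'d0^'n" and Y :: "real^'d2^'n"
    and \<theta> :: "real \<Rightarrow> (real^'d1^'d0) \<times> (real^'d2^'d1)"
  assumes "0 \<le> s" and AC: "abs_continuous_on 0 s \<theta>"
    and flow: "AE r in lebesgue. r \<in> {0..s} \<longrightarrow>
      (\<exists>\<theta>'. (\<theta> has_vector_derivative \<theta>') (at r) \<and> \<theta>' \<in> uminus ` clarke_subdiff (loss X Y) (\<theta> r))"
  shows "norm (fst (\<theta> s) - fst (\<theta> 0))
      \<le> integral {0..s} (\<lambda>r. sqrt 2 * opnorm X * sqrt (loss X Y (\<theta> r)) * norm (snd (\<theta> r)))"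
    and "norm (snd (\<theta> s) - snd (\<theta> 0))
      \<le> integral {0..s} (\<lambda>r. sqrt 2 * opnorm X * sqrt (loss X Y (\<theta> r)) * norm (fst (\<theta> r)))"
proof -
  have \<theta>_cont: "continuous_on {0..s} \<theta>"
    by (rule abs_continuous_on_imp_continuous_on[OF AC])
  have L_cont: "continuous_on {0..s} (\<lambda>r. sqrt 2 * opnorm X * sqrt (loss X Y (\<theta> r)))"
    by (intro continuous_intros continuous_on_compose2[OF continuous_on_loss \<theta>_cont]) auto
  have L_nonneg: "0 \<le> sqrt 2 * opnorm X * sqrt (loss X Y (\<theta> r))" for r
    by (simp add: opnorm_nonneg loss_def)
  show "norm (fst (\<theta> s) - fst (\<theta> 0))
      \<le> integral {0..s} (\<lambda>r. sqrt 2 * opnorm X * sqrt (loss X Y (\<theta> r)) * norm (snd (\<theta> r)))"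
  proof (rule abs_continuous_on_norm_diff_le_integral[OF \<open>0 \<le> s\<close>])
    show "abs_continuous_on 0 s (\<lambda>r. fst (\<theta> r))"
      using AC by (rule abs_continuous_on_compose_1_lipschitz) (metis dist_fst_le dist_norm)
    show "AE r in lebesgue. r \<in> {0..s} \<longrightarrow> (\<exists>f'. ((\<lambda>r. fst (\<theta> r)) has_vector_derivative f') (at r)
        \<and> norm f' \<le> sqrt 2 * opnorm X * sqrt (loss X Y (\<theta> r)) * norm (snd (\<theta> r)))"
      using flow by eventually_elim
        (auto intro!: has_vector_derivative_fst dest!: clarke_subdiff_loss_fst_bound)
  qed (use L_cont L_nonneg \<theta>_cont in \<open>auto intro!: continuous_intros\<close>)
  show "norm (snd (\<theta> s) - snd (\<theta> 0))
      \<le> integral {0..s} (\<lambda>r. sqrt 2 * opnorm X * sqrt (loss X Y (\<theta> r)) * norm (fst (\<theta> r)))"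
  proof (rule abs_continuous_on_norm_diff_le_integral[OF \<open>0 \<le> s\<close>])
    show "abs_continuous_on 0 s (\<lambda>r. snd (\<theta> r))"
      using AC by (rule abs_continuous_on_compose_1_lipschitz) (metis dist_snd_le dist_norm)
    show "AE r in lebesgue. r \<in> {0..s} \<longrightarrow> (\<exists>f'. ((\<lambda>r. snd (\<theta> r)) has_vector_derivative f') (at r)
        \<and> norm f' \<le> sqrt 2 * opnorm X * sqrt (loss X Y (\<theta> r)) * norm (fst (\<theta> r)))"
      using flow by eventually_elim
        (auto intro!: has_vector_derivative_snd dest!: clarke_subdiff_loss_snd_bound)
  qed (use L_cont L_nonneg \<theta>_cont in \<open>auto intro!: continuous_intros\<close>)
qed

lemma gradient_flow_coupled_growth:
  fixes X :: "real^'d0^'n" and Y :: "real^'d2^'n"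
    and \<theta> :: "real \<Rightarrow> (real^'d1^'d0) \<times> (real^'d2^'d1)"
  assumes AC: "\<forall>s\<in>{0..<T}. abs_continuous_on 0 s \<theta>"
    and flow: "AE s in lebesgue. s \<in> {0..<T} \<longrightarrow>
      (\<exists>\<theta>'. (\<theta> has_vector_derivative \<theta>') (at s) \<and> \<theta>' \<in> uminus ` clarke_subdiff (loss X Y) (\<theta> s))"
    and t: "t \<in> {0..<T}"
  shows "coupled_growth (\<lambda>s. fst (\<theta> s)) (\<lambda>s. snd (\<theta> s)) (\<lambda>s. sqrt (loss X Y (\<theta> s)))
    (sqrt 2 * opnorm X) t"
proof
  have \<theta>_cont: "continuous_on {0..t} \<theta>"
    using AC t by (intro abs_continuous_on_imp_continuous_on) auto
  then show "continuous_on {0..t} (\<lambda>s. fst (\<theta> s))" "continuous_on {0..t} (\<lambda>s. snd (\<theta> s))"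
    "continuous_on {0..t} (\<lambda>s. sqrt (loss X Y (\<theta> s)))"
    by (intro continuous_intros continuous_on_compose2[OF continuous_on_loss \<theta>_cont], auto)+
  fix s assume s: "s \<in> {0..t}"
  have "AE r in lebesgue. r \<in> {0..s} \<longrightarrow>
      (\<exists>\<theta>'. (\<theta> has_vector_derivative \<theta>') (at r) \<and> \<theta>' \<in> uminus ` clarke_subdiff (loss X Y) (\<theta> r))"
    using flow by eventually_elim (use s t in auto)
  with s t AC show "norm (fst (\<theta> s) - fst (\<theta> 0))
      \<le> integral {0..s} (\<lambda>r. sqrt 2 * opnorm X * sqrt (loss X Y (\<theta> r)) * norm (snd (\<theta> r)))"
    "norm (snd (\<theta> s) - snd (\<theta> 0))
      \<le> integral {0..s} (\<lambda>r. sqrt 2 * opnorm X * sqrt (loss X Y (\<theta> r)) * norm (fst (\<theta> r)))"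
    by (auto intro!: gradient_flow_layer_growth)
qed (use t in \<open>auto simp: opnorm_nonneg loss_def\<close>)

theorem lemma3p1:
  fixes X :: "real^'d0^'n" and Y :: "real^'d2^'n"
    and \<theta> :: "real \<Rightarrow> (real^'d1^'d0) \<times> (real^'d2^'d1)"
    and T :: real
  assumes "T > 0"
    and "\<forall>t\<in>{0..<T}. abs_continuous_on 0 t \<theta>"
    and "AE t in lebesgue. t \<in> {0..<T} \<longrightarrow>
           (\<exists>\<theta>'. (\<theta> has_vector_derivative \<theta>') (at t) \<and> \<theta>' \<in> uminus ` clarke_subdiff (loss X Y) (\<theta> t))"
    and "t \<in> {0..<T}"
  shows "(norm (\<theta> t - \<theta> 0)
           \<le> sqrt 2 * opnorm X * (norm (fst (\<theta> 0)) + norm (snd (\<theta> 0)))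
               * integral {0..t} (\<lambda>s. sqrt (loss X Y (\<theta> s)))
               * exp (sqrt 2 * opnorm X * integral {0..t} (\<lambda>s. sqrt (loss X Y (\<theta> s))))) \<and>
         (opnorm X * norm (fst (\<theta> t) - fst (\<theta> 0))
           \<le> (1/2) * (2 * sqrt 2 * (opnorm X)\<^sup>2 * norm (snd (\<theta> 0))
                        * integral {0..t} (\<lambda>s. sqrt (loss X Y (\<theta> s)))
                      + 2 * (opnorm X)^3 * norm (fst (\<theta> 0))
                        * (integral {0..t} (\<lambda>s. sqrt (loss X Y (\<theta> s))))\<^sup>2)
               * exp ((opnorm X)\<^sup>2 * (integral {0..t} (\<lambda>s. sqrt (loss X Y (\<theta> s))))\<^sup>2))"
proof -
  define S where "S = integral {0..t} (\<lambda>s. sqrt (loss X Y (\<theta> s)))"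
  interpret coupled_growth "\<lambda>s. fst (\<theta> s)" "\<lambda>s. snd (\<theta> s)" "\<lambda>s. sqrt (loss X Y (\<theta> s))"
    "sqrt 2 * opnorm X" t
    using gradient_flow_coupled_growth[OF assms(2-4)] .
  have "norm (\<theta> t - \<theta> 0) \<le> norm (fst (\<theta> t) - fst (\<theta> 0)) + norm (snd (\<theta> t) - snd (\<theta> 0))"
    using norm_Pair_le[of "fst (\<theta> t - \<theta> 0)" "snd (\<theta> t - \<theta> 0)"]
    by (metis prod.collapse fst_diff snd_diff)
  moreover have "opnorm X * norm (fst (\<theta> t) - fst (\<theta> 0))
      \<le> (1/2) * (2 * sqrt 2 * (opnorm X)\<^sup>2 * norm (snd (\<theta> 0)) * S
                  + 2 * (opnorm X)^3 * norm (fst (\<theta> 0)) * S\<^sup>2)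
          * exp ((opnorm X)\<^sup>2 * S\<^sup>2)"
    using mult_left_mono[OF displacement_fst_bound opnorm_nonneg[of X]]
    by (simp add: S_def power_mult_distrib power2_eq_square power3_eq_cube algebra_simps)
  ultimately show ?thesis
    using displacement_sum_bound unfolding S_def by simp
qed

end
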